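(* Let $N\ge3$ and let $s=(x^1,\dots,x^m,\dots,x^{N-1},u,N)\in S^N\cap S_{nc}$ be a state with $c(G|s)=1$, $\widehat C(s)=C_m$, having the sure-capture property, and with $x^m\notin N(u)$. Then there exists a state $\tilde s=(x^1,\dots,\tilde x^m,\dots,x^{N-1},u,N)\in S^N\cap S_{nc}$, differing from $s$ only in the position of $C_m$, such that (i) $\tilde x^m\in N(u)$, (ii) $c(G|\tilde s)=1$, (iii) $\widehat C(\tilde s)=C_m$, and (iv) $\tilde s$ has the sure-capture property.
   Context: Board and moves: $G=(V,E)$ finite, simple, connected, undirected; $N(u)$ is the open neighbourhood of $u$. There are $N\ge3$ tokens, cops $C_1,\dots,C_{N-1}$ (tokens $1,\dots,N-1$) and robber $R$ (token $N$). A state is $s=(x^1,\dots,x^N,n)$ with $x^i\in V$ the position of token $i$ and $n$ the token to move; $S^n$ is the set of states with token $n$ to move; $s$ is a capture state if $x^i=x^N$ for some $i\le N-1$, and $S_{nc}$ is the set of noncapture states. In each turn the token to move moves to a vertex of its closed neighbourhood (may stay put); order $C_1,\dots,C_{N-1},R,C_1,\dots$; the game ends at the first capture. The modified cops-and-robber (CR) game is the two-player zero-sum game where one player controls all cops, the other the robber, and if capture occurs at time $t$ (number of turns) the robber's payoff is $-\gamma^t$ ($0$ if never), $\gamma\in(0,1)$. $\widehat\Sigma^n$ denotes the set of pure positional strategies of token $n$ that are components of optimal strategies in this game (CR-optimal strategies). For $s\in S_{nc}$, whenever CR-optimal play from $s$ leads to capture, it is always the same cop, denoted $\widehat C(s)$,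 that effects it. State cop number. For $s\in S_{nc}$, $c(G|s)=c_N(G|s)$ is the minimum $k\in\{1,\dots,N-1\}$ for which there exist $k$ cops and strategies for them such that, starting from $s$, a capture (by any cop) occurs whatever the other $N-k$ tokens (including $R$) do; $c(G|s)=\infty$ if no such $k$ exists. Say that a state $s\in S_{nc}$ with $c(G|s)=1$ and $\widehat C(s)=C_m$ has the sure-capture property if for every $\widehat\sigma^m\in\widehat\Sigma^m$ and every strategy profile $\sigma^{-m}$ of the other tokens, play from $s$ under $(\widehat\sigma^m,\sigma^{-m})$ ends in a capture in which $C_m$ is on the robber's vertex. *)

theory Defs
  imports Main "HOL-Library.Extended_Nat"
begin

definition simple_connected_graph :: "'v set \<Rightarrow> ('v \<Rightarrow> 'v \<Rightarrow> bool) \<Rightarrow> bool" where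
  "simple_connected_graph V E \<longleftrightarrow>
     finite V \<and> V \<noteq> {} \<and>
     (\<forall>u v. E u v \<longrightarrow> u \<in> V \<and> v \<in> V) \<and>
     (\<forall>u v. E u v \<longrightarrow> E v u) \<and>
     (\<forall>v. \<not> E v v) \<and>
     (\<forall>u\<in>V. \<forall>v\<in>V. E\<^sup>*\<^sup>* u v)"

definition nbhd :: "'v set \<Rightarrow> ('v \<Rightarrow> 'v \<Rightarrow> bool) \<Rightarrow> 'v \<Rightarrow> 'v set" where
  "nbhd V E u = {w \<in> V. E u w}"

definition cnbhd :: "'v set \<Rightarrow> ('v \<Rightarrow> 'v \<Rightarrow> bool) \<Rightarrow> 'v \<Rightarrow> 'v set" where
  "cnbhd V E u = {w \<in> V. w = u \<or> E u w}"

text \<open>A state (x^1,...,x^N,n) is represented as a pair (xs, n) with xs a list of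
  length N: token i (1 \<le> i \<le> N) sits at xs ! (i-1); cops are tokens 1..N-1,
  the robber is token N; n is the token to move.\<close>
type_synonym 'v state = "'v list \<times> nat"

definition pos :: "'v state \<Rightarrow> nat \<Rightarrow> 'v" where
  "pos s i = fst s ! (i - 1)"

definition valid_state :: "'v set \<Rightarrow> nat \<Rightarrow> 'v state \<Rightarrow> bool" where
  "valid_state V N s \<longleftrightarrow> length (fst s) = N \<and> set (fst s) \<subseteq> V \<and> snd s \<in> {1..N}"

definition is_capture :: "nat \<Rightarrow> 'v state \<Rightarrow> bool" where
  "is_capture N s \<longleftrightarrow> (\<exists>i\<in>{1..N-1}. pos s i = pos s N)"

definition next_tok :: "nat \<Rightarrow> nat \<Rightarrow> nat" where
  "next_tok N n = n mod N + 1"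

definition step :: "nat \<Rightarrow> 'v state \<Rightarrow> 'v \<Rightarrow> 'v state" where
  "step N s v = ((fst s)[snd s - 1 := v], next_tok N (snd s))"

type_synonym 'v strat = "'v state \<Rightarrow> 'v"
type_synonym 'v profile = "nat \<Rightarrow> 'v strat"

definition is_strat :: "'v set \<Rightarrow> ('v \<Rightarrow> 'v \<Rightarrow> bool) \<Rightarrow> nat \<Rightarrow> nat \<Rightarrow> 'v strat \<Rightarrow> bool" where
  "is_strat V E N i \<sigma> \<longleftrightarrow>
     (\<forall>s. valid_state V N s \<and> snd s = i \<longrightarrow> \<sigma> s \<in> cnbhd V E (pos s i))"

definition valid_profile :: "'v set \<Rightarrow> ('v \<Rightarrow> 'v \<Rightarrow> bool) \<Rightarrow> nat \<Rightarrow> 'v profile \<Rightarrow> bool" where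
  "valid_profile V E N \<sigma> \<longleftrightarrow> (\<forall>i\<in>{1..N}. is_strat V E N i (\<sigma> i))"

fun play :: "nat \<Rightarrow> 'v profile \<Rightarrow> 'v state \<Rightarrow> nat \<Rightarrow> 'v state" where
  "play N \<sigma> s 0 = s"
| "play N \<sigma> s (Suc t) = step N (play N \<sigma> s t) (\<sigma> (snd (play N \<sigma> s t)) (play N \<sigma> s t))"

definition first_capture :: "nat \<Rightarrow> 'v profile \<Rightarrow> 'v state \<Rightarrow> nat \<Rightarrow> bool" where
  "first_capture N \<sigma> s t \<longleftrightarrow>
     is_capture N (play N \<sigma> s t) \<and> (\<forall>t'<t. \<not> is_capture N (play N \<sigma> s t'))"

definition rpay :: "real \<Rightarrow> nat \<Rightarrow> 'v profile \<Rightarrow> 'v state \<Rightarrow> real" where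
  "rpay \<gamma> N \<sigma> s =
     (if \<exists>t. is_capture N (play N \<sigma> s t)
      then - (\<gamma> ^ (LEAST t. is_capture N (play N \<sigma> s t))) else 0)"

text \<open>A profile is CR-optimal iff (cops' part, robber's part) is a saddle point
  of the zero-sum game from every state: the robber cannot gain by deviating,
  and the cops (jointly) cannot reduce the robber's payoff by deviating.\<close>
definition cr_optimal :: "real \<Rightarrow> 'v set \<Rightarrow> ('v \<Rightarrow> 'v \<Rightarrow> bool) \<Rightarrow> nat \<Rightarrow> 'v profile \<Rightarrow> bool" where
  "cr_optimal \<gamma> V E N \<sigma> \<longleftrightarrow> valid_profile V E N \<sigma> \<and>
     (\<forall>s. valid_state V N s \<longrightarrow>
        (\<forall>\<sigma>'. valid_profile V E N \<sigma>' \<longrightarrow>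
           rpay \<gamma> N (\<sigma>(N := \<sigma>' N)) s \<le> rpay \<gamma> N \<sigma> s \<and>
           rpay \<gamma> N \<sigma> s \<le> rpay \<gamma> N (\<sigma>'(N := \<sigma> N)) s))"

definition hatSigma :: "real \<Rightarrow> 'v set \<Rightarrow> ('v \<Rightarrow> 'v \<Rightarrow> bool) \<Rightarrow> nat \<Rightarrow> nat \<Rightarrow> 'v strat set" where
  "hatSigma \<gamma> V E N n = {\<tau>. \<exists>\<sigma>. cr_optimal \<gamma> V E N \<sigma> \<and> \<sigma> n = \<tau>}"

definition hatC_is :: "real \<Rightarrow> 'v set \<Rightarrow> ('v \<Rightarrow> 'v \<Rightarrow> bool) \<Rightarrow> nat \<Rightarrow> 'v state \<Rightarrow> nat \<Rightarrow> bool" where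
  "hatC_is \<gamma> V E N s m \<longleftrightarrow> m \<in> {1..N-1} \<and>
     (\<exists>\<sigma> t. cr_optimal \<gamma> V E N \<sigma> \<and> first_capture N \<sigma> s t) \<and>
     (\<forall>\<sigma> t. cr_optimal \<gamma> V E N \<sigma> \<and> first_capture N \<sigma> s t \<longrightarrow>
        pos (play N \<sigma> s t) m = pos (play N \<sigma> s t) N)"

definition k_cops_capture :: "'v set \<Rightarrow> ('v \<Rightarrow> 'v \<Rightarrow> bool) \<Rightarrow> nat \<Rightarrow> 'v state \<Rightarrow> nat \<Rightarrow> bool" where
  "k_cops_capture V E N s k \<longleftrightarrow>
     (\<exists>K. K \<subseteq> {1..N-1} \<and> card K = k \<and>
        (\<exists>\<sigma>K. (\<forall>i\<in>K. is_strat V E N i (\<sigma>K i)) \<and>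
           (\<forall>\<sigma>. valid_profile V E N \<sigma> \<longrightarrow>
              (\<exists>t. is_capture N (play N (\<lambda>i. if i \<in> K then \<sigma>K i else \<sigma> i) s t)))))"

definition state_cop_number :: "'v set \<Rightarrow> ('v \<Rightarrow> 'v \<Rightarrow> bool) \<Rightarrow> nat \<Rightarrow> 'v state \<Rightarrow> enat" where
  "state_cop_number V E N s =
     (if \<exists>k\<in>{1..N-1}. k_cops_capture V E N s k
      then enat (LEAST k. k \<in> {1..N-1} \<and> k_cops_capture V E N s k)
      else \<infinity>)"

definition sure_capture :: "real \<Rightarrow> 'v set \<Rightarrow> ('v \<Rightarrow> 'v \<Rightarrow> bool) \<Rightarrow> nat \<Rightarrow> 'v state \<Rightarrow> nat \<Rightarrow> bool" where
  "sure_capture \<gamma> V E N s m \<longleftrightarrow>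
     (\<forall>\<tau>\<in>hatSigma \<gamma> V E N m. \<forall>\<sigma>. valid_profile V E N \<sigma> \<longrightarrow>
        (\<exists>t. first_capture N (\<sigma>(m := \<tau>)) s t \<and>
             pos (play N (\<sigma>(m := \<tau>)) s t) m = pos (play N (\<sigma>(m := \<tau>)) s t) N))"

end

theory Submission
  imports Defs
begin

(* Fix a CR-optimal profile and let C_m use its strategy while every other token, the robber
   included, stays put. By sure capture C_m catches the motionless robber at u, and it makes its
   capturing move from a neighbour of u; the state s' at the start of that round, with the robber
   to move, differs from s only in the position of C_m.
   Sure capture carries over from s to s'. All CR-optimal profiles have the same value, and a
   profile consistent with the value turn by turn is CR-optimal, so CR-optimal profiles can be
   glued along any set of states: every CR-optimal strategy of C_m can be made to agree with the
   one used above on the states visited before s', and since a play ending in its first capture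
   never repeats a state, the play from s' is unaffected by the change. Sure capture at s' then
   gives c(G|s') = 1 and that C_m is the capturing cop from s'. *)

section \<open>Plays and payoffs\<close>

lemma play_add: "play N \<sigma> q (a + b) = play N \<sigma> (play N \<sigma> q a) b"
  by (induction b) auto

lemma play_Suc_step: "play N \<sigma> q (Suc k) = play N \<sigma> (step N q (\<sigma> (snd q) q)) k"
  by (induction k) auto

lemma valid_profileD:
  assumes "valid_profile V E N \<sigma>" "valid_state V N q"
  shows "\<sigma> (snd q) q \<in> cnbhd V E (pos q (snd q))"
  using assms unfolding valid_profile_def is_strat_def valid_state_def by blast

lemma valid_profile_if:
  assumes "valid_profile V E N \<sigma>1" "valid_profile V E N \<sigma>2"
  shows "valid_profile V E N (\<lambda>i q. if P i q then \<sigma>1 i q else \<sigma>2 i q)"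
  using assms unfolding valid_profile_def is_strat_def by auto

lemma valid_profile_upd:
  assumes "valid_profile V E N \<sigma>1" "valid_profile V E N \<sigma>2"
  shows "valid_profile V E N (\<sigma>1(i := \<sigma>2 i))"
  using assms unfolding valid_profile_def by auto

lemma valid_state_step:
  assumes "valid_state V N q" "v \<in> cnbhd V E (pos q (snd q))"
  shows "valid_state V N (step N q v)"
proof -
  have "v \<in> V" using assms(2) unfolding cnbhd_def by auto
  moreover have "set ((fst q)[snd q - 1 := v]) \<subseteq> insert v (set (fst q))"
    by (rule set_update_subset_insert)
  moreover have "next_tok N (snd q) \<in> {1..N}"
    using assms(1) unfolding next_tok_def valid_state_def by (auto simp: Suc_le_eq)
  ultimately show ?thesis using assms(1) unfolding valid_state_def step_def by auto
qed

lemma valid_state_play: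
  assumes "valid_profile V E N \<sigma>" "valid_state V N q"
  shows "valid_state V N (play N \<sigma> q k)"
proof (induction k)
  case (Suc k)
  then show ?case using valid_state_step valid_profileD[OF assms(1) Suc] by simp
qed (simp add: assms(2))

lemma play_cong:
  assumes "\<And>j. j < k \<Longrightarrow> \<rho> (snd (play N \<sigma> q j)) (play N \<sigma> q j) = \<sigma> (snd (play N \<sigma> q j)) (play N \<sigma> q j)"
  shows "i \<le> k \<Longrightarrow> play N \<rho> q i = play N \<sigma> q i"
proof (induction i)
  case (Suc i)
  then show ?case using assms[of i] by simp
qed simp

lemma first_capture_unique:
  assumes "first_capture N \<sigma> q t1" "first_capture N \<sigma> q t2" shows "t1 = t2"
  using assms unfolding first_capture_def by (metis linorder_neqE_nat)

lemma first_captureI: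
  assumes "is_capture N (play N \<sigma> q t)" obtains t' where "first_capture N \<sigma> q t'"
  using assms exists_least_iff[of "\<lambda>n. is_capture N (play N \<sigma> q n)"]
  unfolding first_capture_def by blast

lemma first_capture_cong:
  assumes "first_capture N \<sigma> q T"
    and "\<And>j. j < T \<Longrightarrow> \<rho> (snd (play N \<sigma> q j)) (play N \<sigma> q j) = \<sigma> (snd (play N \<sigma> q j)) (play N \<sigma> q j)"
  shows "first_capture N \<rho> q T" "play N \<rho> q T = play N \<sigma> q T"
proof -
  have "play N \<rho> q j = play N \<sigma> q j" if "j \<le> T" for j
    using play_cong[of T \<rho> N \<sigma> q j] assms(2) that by blast
  then show "first_capture N \<rho> q T" "play N \<rho> q T = play N \<sigma> q T"
    using assms(1) unfolding first_capture_def by auto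
qed

text \<open>Cutting out a repeated stretch would give an earlier capture.\<close>
lemma first_capture_play_inj:
  assumes "first_capture N \<sigma> q T" "i < j" "j \<le> T"
  shows "play N \<sigma> q i \<noteq> play N \<sigma> q j"
proof
  assume eq: "play N \<sigma> q i = play N \<sigma> q j"
  have "play N \<sigma> q (i + (T - j)) = play N \<sigma> q (j + (T - j))"
    by (simp only: play_add eq)
  then have "is_capture N (play N \<sigma> q (i + (T - j)))"
    using assms unfolding first_capture_def by simp
  moreover have "i + (T - j) < T" using assms(2,3) by simp
  ultimately show False using assms(1) unfolding first_capture_def by blast
qed

lemma play_periodic:
  assumes "play N \<sigma> q p = q" "0 < p"
  shows "play N \<sigma> q i = play N \<sigma> q (i mod p)"
proof (induction i rule: less_induct)
  case (less i)
  show ?case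
  proof (cases "i < p")
    case False
    then have "play N \<sigma> q i = play N \<sigma> q (i - p)"
      using play_add[of N \<sigma> q p "i - p"] assms(1) by simp
    also have "\<dots> = play N \<sigma> q ((i - p) mod p)"
      using less.IH[of "i - p"] assms(2) False by simp
    finally show ?thesis using False by (simp add: le_mod_geq)
  qed simp
qed

lemma play_periodic_no_capture:
  assumes "play N \<sigma> q p = q" "0 < p" "\<And>i. i < p \<Longrightarrow> \<not> is_capture N (play N \<sigma> q i)"
  shows "\<not> is_capture N (play N \<sigma> q i)"
  using play_periodic[OF assms(1,2), of i] assms(2,3) by simp

lemma rpay_first_capture:
  assumes "first_capture N \<sigma> q t" shows "rpay \<gamma> N \<sigma> q = - (\<gamma> ^ t)"
proof -
  have "(LEAST t. is_capture N (play N \<sigma> q t)) = t"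
    using assms unfolding first_capture_def by (intro Least_equality) (auto simp: not_less[symmetric])
  then show ?thesis using assms unfolding rpay_def first_capture_def by auto
qed

lemma rpay_no_capture:
  assumes "\<And>t. \<not> is_capture N (play N \<sigma> q t)" shows "rpay \<gamma> N \<sigma> q = 0"
  using assms unfolding rpay_def by auto

lemma rpay_capture:
  assumes "is_capture N q" shows "rpay \<gamma> N \<sigma> q = -1"
  using rpay_first_capture[of N \<sigma> q 0] assms unfolding first_capture_def by simp

lemma rpay_bounds:
  assumes "0 \<le> \<gamma>" "\<gamma> \<le> 1"
  shows "-1 \<le> rpay \<gamma> N \<sigma> q" "rpay \<gamma> N \<sigma> q \<le> 0"
  using assms power_le_one[OF assms] unfolding rpay_def by auto

lemma rpay_step:
  assumes "\<not> is_capture N q"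
  shows "rpay \<gamma> N \<sigma> q = \<gamma> * rpay \<gamma> N \<sigma> (step N q (\<sigma> (snd q) q))"
proof (cases "\<exists>t. is_capture N (play N \<sigma> q t)")
  case True
  then obtain t where t: "first_capture N \<sigma> q t" by (blast elim: first_captureI)
  with assms obtain t1 where t1: "t = Suc t1"
    unfolding first_capture_def by (cases t) auto
  have "first_capture N \<sigma> (step N q (\<sigma> (snd q) q)) t1"
    using t unfolding first_capture_def t1 by (metis Suc_mono play_Suc_step)
  then show ?thesis using rpay_first_capture t t1 by (metis power_Suc minus_mult_right)
next
  case False
  then show ?thesis by (metis play_Suc_step rpay_no_capture mult_zero_right)
qed

lemma rpay_play:
  assumes "\<And>i. i < j \<Longrightarrow> \<not> is_capture N (play N \<sigma> q i)"
  shows "rpay \<gamma> N \<sigma> q = \<gamma> ^ j * rpay \<gamma> N \<sigma> (play N \<sigma> q j)"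
  using assms by (induction j) (simp_all add: rpay_step)

lemma rpay_cong:
  assumes "\<And>k. (\<And>j. j \<le> k \<Longrightarrow> \<not> is_capture N (play N \<sigma> q j)) \<Longrightarrow>
             \<rho> (snd (play N \<sigma> q k)) (play N \<sigma> q k) = \<sigma> (snd (play N \<sigma> q k)) (play N \<sigma> q k)"
  shows "rpay \<gamma> N \<rho> q = rpay \<gamma> N \<sigma> q"
proof (cases "\<exists>t. is_capture N (play N \<sigma> q t)")
  case True
  then obtain T where T: "first_capture N \<sigma> q T" by (blast elim: first_captureI)
  then have "first_capture N \<rho> q T"
    using assms first_capture_cong(1)[OF T] unfolding first_capture_def by force
  then show ?thesis using T by (simp add: rpay_first_capture)
next
  case False
  then have "play N \<rho> q k = play N \<sigma> q k" for k
    using play_cong[of k \<rho> N \<sigma> q k] assms by blast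
  then show ?thesis using False by (simp add: rpay_def)
qed

lemma valid_profile_deviate:
  assumes "valid_profile V E N \<sigma>" "valid_state V N q" "v \<in> cnbhd V E (pos q (snd q))"
  shows "valid_profile V E N (\<sigma>(snd q := (\<sigma> (snd q))(q := v)))"
  using assms unfolding valid_profile_def is_strat_def by auto

text \<open>The second case occurs when the original play from \<open>step N q v\<close> returns to \<open>q\<close>:
  the deviating play then cycles forever.\<close>
lemma rpay_deviate:
  fixes \<sigma> :: "'v profile" and v :: 'v
  assumes "\<not> is_capture N q"
  defines "\<rho> \<equiv> \<sigma>(snd q := (\<sigma> (snd q))(q := v))"
  shows "rpay \<gamma> N \<rho> q = \<gamma> * rpay \<gamma> N \<sigma> (step N q v) \<or>
         rpay \<gamma> N \<rho> q = 0 \<and> (\<exists>j. rpay \<gamma> N \<sigma> (step N q v) = \<gamma> ^ j * rpay \<gamma> N \<sigma> q)"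
proof -
  define q' where "q' = step N q v"
  let ?returns = "\<lambda>j. play N \<sigma> q' j = q \<and> (\<forall>k\<le>j. \<not> is_capture N (play N \<sigma> q' k))"
  have \<rho>_q: "\<rho> (snd q) q = v" and \<rho>_other: "\<And>x. x \<noteq> q \<Longrightarrow> \<rho> (snd x) x = \<sigma> (snd x) x"
    unfolding \<rho>_def by auto
  have rpay_\<rho>: "rpay \<gamma> N \<rho> q = \<gamma> * rpay \<gamma> N \<rho> q'"
    using rpay_step[OF assms(1), of \<gamma> \<rho>] \<rho>_q unfolding q'_def by simp
  show ?thesis
  proof (cases "\<exists>j. ?returns j")
    case False
    then have "rpay \<gamma> N \<rho> q' = rpay \<gamma> N \<sigma> q'"
      by (intro rpay_cong \<rho>_other) blast
    then show ?thesis using rpay_\<rho> unfolding q'_def by simp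
  next
    case True
    then obtain j where j: "?returns j" and j_min: "\<And>i. i < j \<Longrightarrow> \<not> ?returns i"
      using exists_least_iff[of ?returns] by blast
    have "play N \<rho> q' k = play N \<sigma> q' k" if "k \<le> j" for k
      using play_cong[of j \<rho> N \<sigma> q' k] \<rho>_other j j_min that by fastforce
    then have \<rho>_q': "play N \<rho> q (Suc k) = play N \<sigma> q' k" if "k \<le> j" for k
      using that \<rho>_q play_Suc_step[of N \<rho> q k] unfolding q'_def by simp
    have "\<not> is_capture N (play N \<rho> q k)" if "k < Suc j" for k
      using that assms(1) j \<rho>_q' by (cases k) auto
    then have "\<not> is_capture N (play N \<rho> q k)" for k
      using play_periodic_no_capture[of N \<rho> q "Suc j"] \<rho>_q'[of j] j by simp
    then have "rpay \<gamma> N \<rho> q = 0" by (rule rpay_no_capture)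
    moreover have "rpay \<gamma> N \<sigma> q' = \<gamma> ^ j * rpay \<gamma> N \<sigma> q"
      using rpay_play[of j N \<sigma> q' \<gamma>] j by auto
    ultimately show ?thesis unfolding q'_def by blast
  qed
qed

section \<open>CR-optimal profiles\<close>

lemma cr_optimalD:
  assumes "cr_optimal \<gamma> V E N \<sigma>" "valid_state V N q" "valid_profile V E N \<sigma>'"
  shows "rpay \<gamma> N (\<sigma>(N := \<sigma>' N)) q \<le> rpay \<gamma> N \<sigma> q"
    and "rpay \<gamma> N \<sigma> q \<le> rpay \<gamma> N (\<sigma>'(N := \<sigma> N)) q"
  using assms unfolding cr_optimal_def by blast+

lemma cr_optimal_valid_profile: "cr_optimal \<gamma> V E N \<sigma> \<Longrightarrow> valid_profile V E N \<sigma>"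
  unfolding cr_optimal_def by blast

lemma cr_optimal_rpay_eq:
  assumes "cr_optimal \<gamma> V E N \<sigma>1" "cr_optimal \<gamma> V E N \<sigma>2" "valid_state V N q"
  shows "rpay \<gamma> N \<sigma>1 q = rpay \<gamma> N \<sigma>2 q"
  using cr_optimalD[OF assms(1,3) cr_optimal_valid_profile[OF assms(2)]]
    cr_optimalD[OF assms(2,3) cr_optimal_valid_profile[OF assms(1)]]
  by linarith

lemma cr_optimal_robber_step:
  assumes opt: "cr_optimal \<gamma> V E N \<sigma>" and \<gamma>: "0 \<le> \<gamma>" "\<gamma> \<le> 1"
    and q: "valid_state V N q" "\<not> is_capture N q" "snd q = N"
    and v: "v \<in> cnbhd V E (pos q (snd q))"
  shows "\<gamma> * rpay \<gamma> N \<sigma> (step N q v) \<le> rpay \<gamma> N \<sigma> q"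
proof -
  define \<rho> where "\<rho> = \<sigma>(snd q := (\<sigma> (snd q))(q := v))"
  have "valid_profile V E N \<rho>"
    unfolding \<rho>_def using valid_profile_deviate[OF cr_optimal_valid_profile[OF opt] q(1) v] .
  moreover have "\<sigma>(N := \<rho> N) = \<rho>" unfolding \<rho>_def using q(3) by auto
  ultimately have "rpay \<gamma> N \<rho> q \<le> rpay \<gamma> N \<sigma> q" using cr_optimalD(1)[OF opt q(1)] by metis
  then show ?thesis
    using rpay_deviate[where \<sigma>=\<sigma> and v=v and \<gamma>=\<gamma>, OF q(2)] rpay_bounds[OF \<gamma>, of N \<sigma> q] unfolding \<rho>_def by auto
qed

lemma cr_optimal_cop_step:
  assumes opt: "cr_optimal \<gamma> V E N \<sigma>" and \<gamma>: "0 \<le> \<gamma>" "\<gamma> \<le> 1"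
    and q: "valid_state V N q" "\<not> is_capture N q" "snd q \<noteq> N"
    and v: "v \<in> cnbhd V E (pos q (snd q))"
  shows "rpay \<gamma> N \<sigma> q \<le> \<gamma> * rpay \<gamma> N \<sigma> (step N q v)"
proof -
  define \<rho> where "\<rho> = \<sigma>(snd q := (\<sigma> (snd q))(q := v))"
  have "valid_profile V E N \<rho>"
    unfolding \<rho>_def using valid_profile_deviate[OF cr_optimal_valid_profile[OF opt] q(1) v] .
  moreover have "\<rho>(N := \<sigma> N) = \<rho>" unfolding \<rho>_def using q(3) by auto
  ultimately have le: "rpay \<gamma> N \<sigma> q \<le> rpay \<gamma> N \<rho> q" using cr_optimalD(2)[OF opt q(1)] by metis
  show ?thesis
  proof (cases "rpay \<gamma> N \<rho> q = \<gamma> * rpay \<gamma> N \<sigma> (step N q v)")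
    case False
    then obtain j where "rpay \<gamma> N \<sigma> (step N q v) = \<gamma> ^ j * rpay \<gamma> N \<sigma> q"
      using rpay_deviate[where \<sigma>=\<sigma> and v=v and \<gamma>=\<gamma>, OF q(2)] unfolding \<rho>_def by blast
    moreover have "\<gamma> * \<gamma> ^ j \<le> 1" using \<gamma> by (metis power_Suc power_le_one)
    ultimately show ?thesis
      using rpay_bounds(2)[of \<gamma> N \<sigma> q] \<gamma> by (simp add: mult.assoc[symmetric] mult_le_cancel_right1)
  qed (use le in simp)
qed

lemma le_discounted_play:
  fixes f :: "'v state \<Rightarrow> real"
  assumes \<gamma>: "0 \<le> \<gamma>" and \<rho>: "valid_profile V E N \<rho>" and q0: "valid_state V N q0"
    and f_step: "\<And>q. valid_state V N q \<Longrightarrow> \<not> is_capture N q \<Longrightarrow> f q \<le> \<gamma> * f (step N q (\<rho> (snd q) q))"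
    and no_capture: "\<And>i. i < k \<Longrightarrow> \<not> is_capture N (play N \<rho> q0 i)"
  shows "f q0 \<le> \<gamma> ^ k * f (play N \<rho> q0 k)"
  using no_capture
proof (induction k)
  case (Suc k)
  have "f (play N \<rho> q0 k) \<le> \<gamma> * f (play N \<rho> q0 (Suc k))"
    using f_step[OF valid_state_play[OF \<rho> q0]] Suc.prems by simp
  then have "\<gamma> ^ k * f (play N \<rho> q0 k) \<le> \<gamma> ^ k * (\<gamma> * f (play N \<rho> q0 (Suc k)))"
    using mult_left_mono[of _ _ "\<gamma> ^ k"] \<gamma> by simp
  moreover have "f q0 \<le> \<gamma> ^ k * f (play N \<rho> q0 k)" using Suc by simp
  ultimately have "f q0 \<le> \<gamma> ^ k * (\<gamma> * f (play N \<rho> q0 (Suc k)))" by linarith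
  then show ?case by (simp add: ac_simps)
qed simp

lemma le_rpayI:
  fixes f :: "'v state \<Rightarrow> real"
  assumes \<gamma>: "0 \<le> \<gamma>" and \<rho>: "valid_profile V E N \<rho>" and q0: "valid_state V N q0"
    and f_capture: "\<And>q. valid_state V N q \<Longrightarrow> is_capture N q \<Longrightarrow> f q = -1"
    and f_nonpos: "\<And>q. valid_state V N q \<Longrightarrow> f q \<le> 0"
    and f_step: "\<And>q. valid_state V N q \<Longrightarrow> \<not> is_capture N q \<Longrightarrow> f q \<le> \<gamma> * f (step N q (\<rho> (snd q) q))"
  shows "f q0 \<le> rpay \<gamma> N \<rho> q0"
proof (cases "\<exists>t. is_capture N (play N \<rho> q0 t)")
  case True
  then obtain T where T: "first_capture N \<rho> q0 T" by (blast elim: first_captureI)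
  then have "f q0 \<le> \<gamma> ^ T * f (play N \<rho> q0 T)"
    using le_discounted_play[where f = f, OF \<gamma> \<rho> q0 f_step] unfolding first_capture_def by blast
  also have "f (play N \<rho> q0 T) = -1"
    using f_capture valid_state_play[OF \<rho> q0] T unfolding first_capture_def by blast
  finally show ?thesis using rpay_first_capture[OF T] by simp
next
  case False
  then show ?thesis using f_nonpos[OF q0] by (simp add: rpay_no_capture)
qed

lemma rpay_leI:
  fixes f :: "'v state \<Rightarrow> real"
  assumes \<gamma>: "0 < \<gamma>" "\<gamma> < 1" and \<rho>: "valid_profile V E N \<rho>" and q0: "valid_state V N q0"
    and f_capture: "\<And>q. valid_state V N q \<Longrightarrow> is_capture N q \<Longrightarrow> f q = -1"
    and f_ge: "\<And>q. valid_state V N q \<Longrightarrow> -1 \<le> f q"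
    and f_step: "\<And>q. valid_state V N q \<Longrightarrow> \<not> is_capture N q \<Longrightarrow> \<gamma> * f (step N q (\<rho> (snd q) q)) \<le> f q"
  shows "rpay \<gamma> N \<rho> q0 \<le> f q0"
proof -
  have chain: "- f q0 \<le> \<gamma> ^ k * - f (play N \<rho> q0 k)"
    if "\<And>i. i < k \<Longrightarrow> \<not> is_capture N (play N \<rho> q0 i)" for k
  proof (rule le_discounted_play[OF _ \<rho> q0, of \<gamma> "\<lambda>q. - f q"])
    show "- f q \<le> \<gamma> * - f (step N q (\<rho> (snd q) q))"
      if "valid_state V N q" "\<not> is_capture N q" for q
      using f_step[OF that] by simp
  qed (use \<gamma> that in auto)
  show ?thesis
  proof (cases "\<exists>t. is_capture N (play N \<rho> q0 t)")
    case True
    then obtain T where T: "first_capture N \<rho> q0 T" by (blast elim: first_captureI)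
    have "f (play N \<rho> q0 T) = -1"
      using f_capture valid_state_play[OF \<rho> q0] T unfolding first_capture_def by blast
    then show ?thesis using chain[of T] T rpay_first_capture[OF T] unfolding first_capture_def by simp
  next
    case False
    have "- f q0 \<le> \<gamma> ^ k" for k
    proof -
      have "- f (play N \<rho> q0 k) \<le> 1" using f_ge valid_state_play[OF \<rho> q0] by (simp add: minus_le_iff)
      then have "\<gamma> ^ k * - f (play N \<rho> q0 k) \<le> \<gamma> ^ k * 1"
        using \<gamma> by (intro mult_left_mono) simp_all
      then show ?thesis using chain[of k] False by simp
    qed
    then have "0 \<le> f q0"
      using real_arch_pow_inv[OF _ \<gamma>(2), of "- f q0"] by (meson leI neg_0_less_iff_less not_le)
    then show ?thesis using False by (simp add: rpay_no_capture)
  qed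
qed

lemma rpay_eqI:
  fixes f :: "'v state \<Rightarrow> real"
  assumes \<gamma>: "0 < \<gamma>" "\<gamma> < 1" and \<rho>: "valid_profile V E N \<rho>" and q0: "valid_state V N q0"
    and f_capture: "\<And>q. valid_state V N q \<Longrightarrow> is_capture N q \<Longrightarrow> f q = -1"
    and f_bounds: "\<And>q. valid_state V N q \<Longrightarrow> -1 \<le> f q" "\<And>q. valid_state V N q \<Longrightarrow> f q \<le> 0"
    and f_step: "\<And>q. valid_state V N q \<Longrightarrow> \<not> is_capture N q \<Longrightarrow> f q = \<gamma> * f (step N q (\<rho> (snd q) q))"
  shows "rpay \<gamma> N \<rho> q0 = f q0"
proof (rule antisym)
  show "rpay \<gamma> N \<rho> q0 \<le> f q0"
  proof (rule rpay_leI[OF \<gamma> \<rho> q0 f_capture f_bounds(1)])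
    fix q assume "valid_state V N q" "\<not> is_capture N q"
    from f_step[OF this] show "\<gamma> * f (step N q (\<rho> (snd q) q)) \<le> f q" by linarith
  qed
  show "f q0 \<le> rpay \<gamma> N \<rho> q0"
  proof (rule le_rpayI[OF _ \<rho> q0 f_capture f_bounds(2)])
    fix q assume "valid_state V N q" "\<not> is_capture N q"
    from f_step[OF this] show "f q \<le> \<gamma> * f (step N q (\<rho> (snd q) q))" by linarith
  qed (use \<gamma> in simp)
qed

lemma cr_optimal_if_consistent:
  assumes \<gamma>: "0 < \<gamma>" "\<gamma> < 1" and opt: "cr_optimal \<gamma> V E N \<sigma>" and \<mu>: "valid_profile V E N \<mu>"
    and consistent: "\<And>q. valid_state V N q \<Longrightarrow> \<not> is_capture N q \<Longrightarrow>
                        rpay \<gamma> N \<sigma> q = \<gamma> * rpay \<gamma> N \<sigma> (step N q (\<mu> (snd q) q))"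
  shows "cr_optimal \<gamma> V E N \<mu>"
proof -
  let ?f = "rpay \<gamma> N \<sigma>"
  have \<gamma>': "0 \<le> \<gamma>" "\<gamma> \<le> 1" using \<gamma> by simp_all
  have f_capture: "\<And>q. valid_state V N q \<Longrightarrow> is_capture N q \<Longrightarrow> ?f q = -1"
    by (simp add: rpay_capture)
  have f_bounds: "\<And>q. valid_state V N q \<Longrightarrow> -1 \<le> ?f q" "\<And>q. valid_state V N q \<Longrightarrow> ?f q \<le> 0"
    by (simp_all add: rpay_bounds[OF \<gamma>'])
  have rpay_\<mu>: "rpay \<gamma> N \<mu> q = ?f q" if "valid_state V N q" for q
    using rpay_eqI[where f = ?f, OF \<gamma> \<mu> that f_capture f_bounds consistent] .
  show ?thesis
    unfolding cr_optimal_def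
  proof (intro conjI[OF \<mu>] allI impI)
    fix q \<sigma>' assume q: "valid_state V N q" and \<sigma>': "valid_profile V E N \<sigma>'"
    have "rpay \<gamma> N (\<mu>(N := \<sigma>' N)) q \<le> ?f q"
    proof (rule rpay_leI[OF \<gamma> valid_profile_upd[OF \<mu> \<sigma>'] q f_capture f_bounds(1)])
      fix x assume x: "valid_state V N x" "\<not> is_capture N x"
      then show "\<gamma> * ?f (step N x ((\<mu>(N := \<sigma>' N)) (snd x) x)) \<le> ?f x"
        using cr_optimal_robber_step[OF opt \<gamma>' x] valid_profileD[OF \<sigma>' x(1)] consistent[OF x]
        by (cases "snd x = N") auto
    qed
    moreover have "?f q \<le> rpay \<gamma> N (\<sigma>'(N := \<mu> N)) q"
    proof (rule le_rpayI[OF \<gamma>'(1) valid_profile_upd[OF \<sigma>' \<mu>] q f_capture f_bounds(2)])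
      fix x assume x: "valid_state V N x" "\<not> is_capture N x"
      then show "?f x \<le> \<gamma> * ?f (step N x ((\<sigma>'(N := \<mu> N)) (snd x) x))"
        using cr_optimal_cop_step[OF opt \<gamma>' x] valid_profileD[OF \<sigma>' x(1)] consistent[OF x]
        by (cases "snd x = N") auto
    qed
    ultimately show "rpay \<gamma> N (\<mu>(N := \<sigma>' N)) q \<le> rpay \<gamma> N \<mu> q \<and>
        rpay \<gamma> N \<mu> q \<le> rpay \<gamma> N (\<sigma>'(N := \<mu> N)) q"
      using rpay_\<mu>[OF q] by simp
  qed
qed

lemma cr_optimal_glue:
  assumes \<gamma>: "0 < \<gamma>" "\<gamma> < 1" and opt1: "cr_optimal \<gamma> V E N \<sigma>1" and opt2: "cr_optimal \<gamma> V E N \<sigma>2"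
  shows "cr_optimal \<gamma> V E N (\<lambda>i q. if q \<in> P then \<sigma>1 i q else \<sigma>2 i q)"
proof (rule cr_optimal_if_consistent[OF \<gamma> opt1])
  note valid1 = cr_optimal_valid_profile[OF opt1] and valid2 = cr_optimal_valid_profile[OF opt2]
  show "valid_profile V E N (\<lambda>i q. if q \<in> P then \<sigma>1 i q else \<sigma>2 i q)"
    using valid_profile_if[OF valid1 valid2] .
  fix q assume q: "valid_state V N q" "\<not> is_capture N q"
  have "valid_state V N (step N q (\<sigma>2 (snd q) q))"
    using valid_state_step[OF q(1) valid_profileD[OF valid2 q(1)]] .
  then have "q \<notin> P \<Longrightarrow> rpay \<gamma> N \<sigma>1 q = \<gamma> * rpay \<gamma> N \<sigma>1 (step N q (\<sigma>2 (snd q) q))"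
    using rpay_step[OF q(2), of \<gamma> \<sigma>2] cr_optimal_rpay_eq[OF opt1 opt2] q(1) by simp
  then show "rpay \<gamma> N \<sigma>1 q =
      \<gamma> * rpay \<gamma> N \<sigma>1 (step N q ((\<lambda>i q. if q \<in> P then \<sigma>1 i q else \<sigma>2 i q) (snd q) q))"
    using rpay_step[OF q(2), of \<gamma> \<sigma>1] by (cases "q \<in> P") simp_all
qed

section \<open>A lone cop against motionless tokens\<close>

definition stay_put :: "'v profile" where
  "stay_put i q = pos q i"

lemma pos_in_vertices:
  assumes "valid_state V N q" "i \<in> {1..N}"
  shows "pos q i \<in> V"
proof -
  have "i - 1 < length (fst q)" using assms unfolding valid_state_def by auto
  then show ?thesis using assms(1) nth_mem unfolding valid_state_def pos_def by blast
qed

lemma valid_profile_stay_put: "valid_profile V E N stay_put"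
  unfolding valid_profile_def is_strat_def stay_put_def cnbhd_def by (auto intro: pos_in_vertices)

lemma snd_play:
  assumes "snd q = N" "0 < N"
  shows "snd (play N \<sigma> q k) = (if k mod N = 0 then N else k mod N)"
proof (induction k)
  case (Suc k)
  have "snd (play N \<sigma> q (Suc k)) = snd (play N \<sigma> q k) mod N + 1"
    by (simp add: step_def next_tok_def)
  then show ?case
    using Suc assms(2) by (cases "N = 1") (auto simp: mod_Suc)
qed (use assms in simp)

lemma fst_step_stay: "fst (step N q (pos q (snd q))) = fst q"
  unfolding step_def pos_def by simp

lemma fst_play_Suc_stay:
  assumes "\<And>i. i \<noteq> m \<Longrightarrow> \<pi> i = stay_put i" "snd (play N \<pi> s k) \<noteq> m"
  shows "fst (play N \<pi> s (Suc k)) = fst (play N \<pi> s k)"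
  using assms by (simp add: stay_put_def fst_step_stay)

lemma fst_play_lone_mover:
  assumes others: "\<And>i. i \<noteq> m \<Longrightarrow> \<pi> i = stay_put i" and m: "m - 1 < length (fst s)"
  shows "fst (play N \<pi> s k) = (fst s)[m - 1 := pos (play N \<pi> s k) m]"
proof (induction k)
  case 0
  then show ?case by (simp add: pos_def)
next
  case (Suc k)
  let ?q = "play N \<pi> s k"
  show ?case
  proof (cases "snd ?q = m")
    case True
    then have "fst (play N \<pi> s (Suc k)) = (fst ?q)[m - 1 := \<pi> m ?q]"
      by (simp add: step_def)
    also have "\<dots> = (fst s)[m - 1 := \<pi> m ?q]"
      by (subst Suc.IH) simp
    finally show ?thesis using m by (simp add: pos_def)
  next
    case False
    then have unchanged: "fst (play N \<pi> s (Suc k)) = fst ?q"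
      using fst_play_Suc_stay[OF others] by blast
    then have "pos (play N \<pi> s (Suc k)) m = pos ?q m"
      by (simp add: pos_def)
    then show ?thesis by (simp only: unchanged Suc.IH)
  qed
qed
lemma capture_on_own_turn:
  assumes others: "\<And>i. i \<noteq> m \<Longrightarrow> \<pi> i = stay_put i" and m: "m \<in> {1..N-1}"
    and s: "\<not> is_capture N s"
    and t: "first_capture N \<pi> s t" "pos (play N \<pi> s t) m = pos (play N \<pi> s t) N"
  obtains t1 where "t = Suc t1" "snd (play N \<pi> s t1) = m"
proof -
  obtain t1 where t1: "t = Suc t1"
    using t(1) s unfolding first_capture_def by (cases t) auto
  have "snd (play N \<pi> s t1) = m"
  proof (rule ccontr)
    assume "snd (play N \<pi> s t1) \<noteq> m"
    then have "fst (play N \<pi> s t) = fst (play N \<pi> s t1)"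
      using fst_play_Suc_stay[OF others] t1 by blast
    then have "is_capture N (play N \<pi> s t1)"
      using t(2) m unfolding is_capture_def pos_def by auto
    then show False using t(1) t1 unfolding first_capture_def by simp
  qed
  then show ?thesis using that t1 by blast
qed

lemma pos_play_before_turn:
  assumes others: "\<And>i. i \<noteq> m \<Longrightarrow> \<pi> i = stay_put i"
    and "snd s = N" "m < N" "k mod N = 0" "r \<le> m"
  shows "pos (play N \<pi> s (k + r)) m = pos (play N \<pi> s k) m"
  using assms(5)
proof (induction r)
  case (Suc r)
  have "(k + r) mod N = r" using assms(3,4) Suc.prems by (simp add: mod_add_left_eq[symmetric])
  then have "snd (play N \<pi> s (k + r)) \<noteq> m"
    using snd_play[OF assms(2), of \<pi> "k + r"] Suc.prems assms(3) by auto
  then show ?case using fst_play_Suc_stay[OF others] Suc unfolding pos_def by simp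
qed simp

lemma lone_cop_capture:
  assumes sym: "\<And>x y. E x y \<Longrightarrow> E y x" and m: "m \<in> {1..N-1}"
    and s: "valid_state V N s" "snd s = N" "\<not> is_capture N s"
    and \<pi>: "valid_profile V E N \<pi>" and others: "\<And>i. i \<noteq> m \<Longrightarrow> \<pi> i = stay_put i"
    and t: "first_capture N \<pi> s t" "pos (play N \<pi> s t) m = pos (play N \<pi> s t) N"
  obtains t' where "t' < t" "play N \<pi> s t' = ((fst s)[m - 1 := pos (play N \<pi> s t') m], N)"
    "pos (play N \<pi> s t') m \<in> nbhd V E (pos s N)"
proof -
  let ?p = "play N \<pi> s" and ?u = "pos s N"
  have N: "0 < N" "m < N" and m1: "m - 1 < length (fst s)"
    using m s(1) unfolding valid_state_def by auto
  note fst_p = fst_play_lone_mover[OF others m1, of N]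
  have robber: "pos (?p k) N = ?u" for k
    using arg_cong[OF fst_p[of k], of "\<lambda>xs. xs ! (N - 1)"] N m unfolding pos_def by auto
  note turn = snd_play[OF s(2) N(1), of \<pi>]
  obtain t1 where t1: "t = Suc t1" and mover: "snd (?p t1) = m"
    using capture_on_own_turn[OF others m s(3) t] .
  have nc1: "\<not> is_capture N (?p t1)" using t(1) t1 unfolding first_capture_def by simp
  have "t1 mod N = m" using turn[of t1] mover N by (auto split: if_splits)
  define t' where "t' = t1 div N * N"
  have t': "t1 = t' + m" "t' mod N = 0"
    unfolding t'_def using div_mult_mod_eq[of t1 N] \<open>t1 mod N = m\<close> by simp_all
  define x where "x = pos (?p t') m"
  have x_t1: "pos (?p t1) m = x"
    using pos_play_before_turn[OF others s(2) N(2) t'(2) order_refl] t'(1) unfolding x_def by simp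
  have q1: "valid_state V N (?p t1)" using valid_state_play[OF \<pi> s(1)] .
  have "pos (?p t) m = \<pi> m (?p t1)"
    using mover t1 q1 m unfolding valid_state_def by (auto simp: step_def pos_def)
  also have "\<dots> \<in> cnbhd V E x" using valid_profileD[OF \<pi> q1] mover x_t1 by simp
  finally have "?u \<in> cnbhd V E x" using t(2) robber by simp
  moreover have "x \<noteq> ?u" using nc1 m x_t1 robber unfolding is_capture_def by force
  moreover have "x \<in> V"
    using pos_in_vertices[OF valid_state_play[OF \<pi> s(1)]] m unfolding x_def by auto
  ultimately have "x \<in> nbhd V E ?u" using sym unfolding cnbhd_def nbhd_def by auto
  moreover have "?p t' = ((fst s)[m - 1 := x], N)"
    using fst_p[of t'] turn[of t'] t'(2) unfolding x_def by (simp add: prod_eq_iff)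
  moreover have "t' < t" using t' t1 by simp
  ultimately show ?thesis using that unfolding x_def by blast
qed

section \<open>Sure capture\<close>

lemma sure_captureD:
  assumes "sure_capture \<gamma> V E N q m" "\<tau> \<in> hatSigma \<gamma> V E N m" "valid_profile V E N \<sigma>"
  obtains t where "first_capture N (\<sigma>(m := \<tau>)) q t"
    "pos (play N (\<sigma>(m := \<tau>)) q t) m = pos (play N (\<sigma>(m := \<tau>)) q t) N"
  using assms unfolding sure_capture_def by blast

lemma first_capture_play_shift:
  assumes "first_capture N \<sigma> q T" "k \<le> T"
  shows "first_capture N \<sigma> (play N \<sigma> q k) (T - k)"
  using assms unfolding first_capture_def by (auto simp: play_add[symmetric])

lemma first_capture_suffix:
  assumes T: "first_capture N \<sigma> q T" "k \<le> T"
    and agree: "\<And>x. x \<notin> play N \<sigma> q ` {..<k} \<Longrightarrow> \<rho> (snd x) x = \<sigma> (snd x) x"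
  shows "first_capture N \<rho> (play N \<sigma> q k) (T - k)"
    and "play N \<rho> (play N \<sigma> q k) (T - k) = play N \<sigma> q T"
proof -
  have T': "first_capture N \<sigma> (play N \<sigma> q k) (T - k)" using first_capture_play_shift[OF T] .
  have "play N \<sigma> (play N \<sigma> q k) j \<notin> play N \<sigma> q ` {..<k}" if "j < T - k" for j
  proof
    assume "play N \<sigma> (play N \<sigma> q k) j \<in> play N \<sigma> q ` {..<k}"
    then obtain i where "i < k" "play N \<sigma> q i = play N \<sigma> q (k + j)" by (auto simp: play_add)
    then show False using first_capture_play_inj[OF T(1), of i "k + j"] that by simp
  qed
  then show "first_capture N \<rho> (play N \<sigma> q k) (T - k)"
    and "play N \<rho> (play N \<sigma> q k) (T - k) = play N \<sigma> q T"
    using first_capture_cong[OF T', of \<rho>] agree play_add[of N \<sigma> q k "T - k"] T(2) by auto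
qed

text \<open>Gluing makes \<open>C\<^sub>m\<close> follow the given play up to turn \<open>k\<close> and an arbitrary CR-optimal
  strategy afterwards; since a capturing play never repeats a state, only the latter matters from
  turn \<open>k\<close> on.\<close>
lemma sure_capture_play:
  assumes \<gamma>: "0 < \<gamma>" "\<gamma> < 1" and sure: "sure_capture \<gamma> V E N s m"
    and \<pi>: "valid_profile V E N \<pi>" "\<pi> m \<in> hatSigma \<gamma> V E N m"
    and no_capture: "\<And>j. j \<le> k \<Longrightarrow> \<not> is_capture N (play N \<pi> s j)"
  shows "sure_capture \<gamma> V E N (play N \<pi> s k) m"
  unfolding sure_capture_def
proof (intro ballI allI impI)
  fix \<tau> \<sigma> assume \<tau>: "\<tau> \<in> hatSigma \<gamma> V E N m" and \<sigma>: "valid_profile V E N \<sigma>"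
  obtain \<sigma>0 where opt0: "cr_optimal \<gamma> V E N \<sigma>0" "\<sigma>0 m = \<pi> m"
    using \<pi>(2) unfolding hatSigma_def by blast
  obtain \<sigma>2 where opt2: "cr_optimal \<gamma> V E N \<sigma>2" "\<sigma>2 m = \<tau>"
    using \<tau> unfolding hatSigma_def by blast
  define P where "P = play N \<pi> s ` {..<k}"
  define \<rho> where "\<rho> = \<sigma>(m := \<tau>)"
  define \<rho>' where "\<rho>' = (\<lambda>i q. if q \<in> P then \<pi> i q else \<rho> i q)"
  define \<mu> where "\<mu> = (\<lambda>i q. if q \<in> P then \<sigma>0 i q else \<sigma>2 i q)"
  define \<sigma>' where "\<sigma>' = (\<lambda>i q. if q \<in> P then \<pi> i q else \<sigma> i q)"
  have "\<mu> m \<in> hatSigma \<gamma> V E N m"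
    using cr_optimal_glue[OF \<gamma> opt0(1) opt2(1)] unfolding \<mu>_def hatSigma_def by blast
  moreover have "valid_profile V E N \<sigma>'"
    unfolding \<sigma>'_def using valid_profile_if[OF \<pi>(1) \<sigma>] .
  moreover have "\<sigma>'(m := \<mu> m) = \<rho>'"
    unfolding \<rho>'_def \<rho>_def \<sigma>'_def \<mu>_def using opt0(2) opt2(2) by (auto simp: fun_eq_iff)
  ultimately obtain T where T: "first_capture N \<rho>' s T"
    and T_m: "pos (play N \<rho>' s T) m = pos (play N \<rho>' s T) N"
    using sure_captureD[OF sure] by metis
  have prefix: "play N \<rho>' s j = play N \<pi> s j" if "j \<le> k" for j
    using play_cong[of k \<rho>' N \<pi> s j] that unfolding \<rho>'_def P_def by auto
  have "k \<le> T"
  proof (rule ccontr)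
    assume "\<not> k \<le> T"
    then have "\<not> is_capture N (play N \<rho>' s T)" using no_capture prefix by simp
    then show False using T unfolding first_capture_def by blast
  qed
  moreover have "play N \<rho>' s ` {..<k} = P" unfolding P_def using prefix by auto
  ultimately have "first_capture N \<rho> (play N \<pi> s k) (T - k)"
    "play N \<rho> (play N \<pi> s k) (T - k) = play N \<rho>' s T"
    using first_capture_suffix[OF T \<open>k \<le> T\<close>, of \<rho>] prefix[of k] unfolding \<rho>'_def by auto
  then show "\<exists>t. first_capture N (\<sigma>(m := \<tau>)) (play N \<pi> s k) t \<and>
      pos (play N (\<sigma>(m := \<tau>)) (play N \<pi> s k) t) m = pos (play N (\<sigma>(m := \<tau>)) (play N \<pi> s k) t) N"
    using T_m unfolding \<rho>_def by metis
qed

lemma state_cop_number_eq_1_if_sure_capture: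
  assumes sure: "sure_capture \<gamma> V E N q m" and m: "m \<in> {1..N-1}" and opt: "cr_optimal \<gamma> V E N \<sigma>"
  shows "state_cop_number V E N q = 1"
proof -
  have "k_cops_capture V E N q 1"
    unfolding k_cops_capture_def
  proof (intro exI[of _ "{m}"] exI[of _ "\<lambda>_. \<sigma> m"] conjI ballI allI impI)
    show "{m} \<subseteq> {1..N-1}" "card {m} = 1" using m by simp_all
    show "is_strat V E N i (\<sigma> m)" if "i \<in> {m}" for i
      using cr_optimal_valid_profile[OF opt] m that unfolding valid_profile_def by auto
    fix \<sigma>' assume "valid_profile V E N \<sigma>'"
    moreover have "\<sigma> m \<in> hatSigma \<gamma> V E N m" using opt unfolding hatSigma_def by blast
    ultimately obtain t where "first_capture N (\<sigma>'(m := \<sigma> m)) q t"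
      using sure_captureD[OF sure] by metis
    moreover have "(\<lambda>i. if i \<in> {m} then \<sigma> m else \<sigma>' i) = \<sigma>'(m := \<sigma> m)"
      by (auto simp: fun_eq_iff)
    ultimately show "\<exists>t. is_capture N (play N (\<lambda>i. if i \<in> {m} then \<sigma> m else \<sigma>' i) q t)"
      unfolding first_capture_def by auto
  qed
  then have "(LEAST k. k \<in> {1..N-1} \<and> k_cops_capture V E N q k) = 1"
    using m by (intro Least_equality) auto
  then show ?thesis
    using \<open>k_cops_capture V E N q 1\<close> m unfolding state_cop_number_def
    by (auto simp: one_enat_def)
qed

lemma hatC_is_if_sure_capture:
  assumes sure: "sure_capture \<gamma> V E N q m" and m: "m \<in> {1..N-1}" and opt: "cr_optimal \<gamma> V E N \<sigma>"
  shows "hatC_is \<gamma> V E N q m"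
proof -
  have captured_by_m: "\<exists>t. first_capture N \<sigma>' q t \<and> pos (play N \<sigma>' q t) m = pos (play N \<sigma>' q t) N"
    if "cr_optimal \<gamma> V E N \<sigma>'" for \<sigma>'
  proof -
    have "\<sigma>' m \<in> hatSigma \<gamma> V E N m" using that unfolding hatSigma_def by blast
    then show ?thesis
      using sure_captureD[OF sure _ cr_optimal_valid_profile[OF that]] by (metis fun_upd_triv)
  qed
  show ?thesis
    unfolding hatC_is_def
  proof (intro conjI m allI impI)
    show "\<exists>\<sigma> t. cr_optimal \<gamma> V E N \<sigma> \<and> first_capture N \<sigma> q t"
      using captured_by_m[OF opt] opt by blast
    fix \<sigma>' t assume "cr_optimal \<gamma> V E N \<sigma>' \<and> first_capture N \<sigma>' q t"
    then show "pos (play N \<sigma>' q t) m = pos (play N \<sigma>' q t) N"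
      using captured_by_m first_capture_unique by blast
  qed
qed

theorem mainTheorem13:
  fixes V :: "'v set" and E :: "'v \<Rightarrow> 'v \<Rightarrow> bool" and N :: nat and \<gamma> :: real
    and s :: "'v state" and m :: nat
  assumes "simple_connected_graph V E"
    and "N \<ge> 3"
    and "0 < \<gamma>" and "\<gamma> < 1"
    and "valid_state V N s" and "snd s = N" and "\<not> is_capture N s"
    and "state_cop_number V E N s = 1"
    and "hatC_is \<gamma> V E N s m"
    and "sure_capture \<gamma> V E N s m"
    and "pos s m \<notin> nbhd V E (pos s N)"
  shows "\<exists>xm st. st = ((fst s)[m - 1 := xm], N) \<and>
           valid_state V N st \<and> snd st = N \<and> \<not> is_capture N st \<and>
           xm \<in> nbhd V E (pos s N) \<and>
           state_cop_number V E N st = 1 \<and>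
           hatC_is \<gamma> V E N st m \<and>
           sure_capture \<gamma> V E N st m"
proof -
  have sym: "\<And>x y. E x y \<Longrightarrow> E y x" using assms(1) unfolding simple_connected_graph_def by blast
  obtain \<sigma>0 where opt: "cr_optimal \<gamma> V E N \<sigma>0" and m: "m \<in> {1..N-1}"
    using assms(9) unfolding hatC_is_def by blast
  have hat: "\<sigma>0 m \<in> hatSigma \<gamma> V E N m" using opt unfolding hatSigma_def by blast
  define \<pi> where "\<pi> = stay_put(m := \<sigma>0 m)"
  have \<pi>: "valid_profile V E N \<pi>"
    unfolding \<pi>_def using valid_profile_upd[OF valid_profile_stay_put cr_optimal_valid_profile[OF opt]] .
  obtain t where t: "first_capture N \<pi> s t" "pos (play N \<pi> s t) m = pos (play N \<pi> s t) N"
    using sure_captureD[OF assms(10) hat valid_profile_stay_put] unfolding \<pi>_def by metis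
  obtain t' where t': "t' < t" "play N \<pi> s t' = ((fst s)[m - 1 := pos (play N \<pi> s t') m], N)"
    and neighbour: "pos (play N \<pi> s t') m \<in> nbhd V E (pos s N)"
    using lone_cop_capture[OF sym m assms(5-7) \<pi> _ t] unfolding \<pi>_def by auto
  have no_capture: "\<And>j. j \<le> t' \<Longrightarrow> \<not> is_capture N (play N \<pi> s j)"
    using t(1) t'(1) unfolding first_capture_def by auto
  define st where "st = play N \<pi> s t'"
  have st: "st = ((fst s)[m - 1 := pos st m], N)" using t'(2) unfolding st_def .
  then have "snd st = N" by (metis snd_conv)
  have sure: "sure_capture \<gamma> V E N st m"
    using sure_capture_play[OF assms(3,4,10) \<pi> _ no_capture] hat unfolding st_def \<pi>_def by simp
  show ?thesis
    using st \<open>snd st = N\<close> neighbour no_capture[of t'] valid_state_play[OF \<pi> assms(5)] sure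
      state_cop_number_eq_1_if_sure_capture[OF sure m opt] hatC_is_if_sure_capture[OF sure m opt]
    unfolding st_def by blast
qed

end
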